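(* Let $G=(V,E)$ be a computation graph with $n=|V|$ vertices, and let $M$ be the fast-memory size. Let $J^*_G$ be the minimum number of non-trivial I/Os over all valid evaluations of $G$, let $\mathcal{O}_G$ be the set of topological evaluation orders of $G$, and for $X\in\mathcal{O}_G$ let $\mathcal{P}_X$ be the set of partitions of $V$ into parts that are each contiguous in the order $X$. Then $$J^*_G \;\geq\; \min_{X \in \mathcal{O}_G}\ \max_{P \in \mathcal{P}_X} \left( \sum_{S \in P}\ \sum_{(u,v) \in \partial S} \frac{1}{d_{out}(u)} \;-\; 2M |P| \right).$$
   Context: A computation graph is a finite directed acyclic graph $G=(V,E)$. Each vertex is an operation producing a single element, and an edge $(u,v)$ means the result of $u$ is an operand of $v$. Sources are the inputs and sinks are the outputs. Execution model: a single processor has a fast memory holding at most $M$ elements and an unbounded slow memory. Every vertex is evaluated exactly once (no recomputation), in an order that is topological with respect to $G$. To evaluate $v$, all parents of $v$ must be in fast memory; a parent not present must be read from slow memory. The eviction policy is unconstrained, but a value that is evicted while still needed by a later vertex must first be written to slow memory. Only non-trivial I/O is counted. Inputs can be placed directly into fast memory at no cost, and outputs are reported immediately at no cost when computed. However, an input that is evicted while still needed must be written to slow memory. Each transfer of one element from fast to slow memory or from slow to fast memory counts as one I/O. $d_{out}(u)$ is the out-degree of $u$ in $G$. For $S\subseteq V$, $\partial S$ is the set of edges $(u,v)\in E$ with exactly one endpoint in $S$. *)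

theory Defs
  imports Complex_Main
begin

definition comp_graph :: "'a set \<Rightarrow> ('a \<times> 'a) set \<Rightarrow> bool" where
  "comp_graph V E \<longleftrightarrow> finite V \<and> E \<subseteq> V \<times> V \<and> acyclic E"

definition d_out :: "('a \<times> 'a) set \<Rightarrow> 'a \<Rightarrow> nat" where
  "d_out E u = card {v. (u, v) \<in> E}"

definition boundary :: "('a \<times> 'a) set \<Rightarrow> 'a set \<Rightarrow> ('a \<times> 'a) set" where
  "boundary E S = {(u, v) \<in> E. (u \<in> S) \<noteq> (v \<in> S)}"

section \<open>Execution model (red-blue pebbling without recomputation)\<close>

datatype 'a io_op = Compute 'a | Read 'a | Write 'a | Evict 'a

text \<open>State: (fast memory, slow memory, set of already evaluated vertices).\<close>
type_synonym 'a mstate = "'a set \<times> 'a set \<times> 'a set"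

fun step :: "'a set \<Rightarrow> ('a \<times> 'a) set \<Rightarrow> nat \<Rightarrow> 'a mstate \<Rightarrow> 'a io_op \<Rightarrow> 'a mstate option" where
  "step V E M (F, Sl, C) (Compute v) =
     (if v \<in> V \<and> v \<notin> C \<and> (\<forall>u. (u, v) \<in> E \<longrightarrow> u \<in> F) \<and> card (insert v F) \<le> M
      then Some (insert v F, Sl, insert v C) else None)"
| "step V E M (F, Sl, C) (Read v) =
     (if v \<in> Sl \<and> card (insert v F) \<le> M then Some (insert v F, Sl, C) else None)"
| "step V E M (F, Sl, C) (Write v) =
     (if v \<in> F then Some (F, insert v Sl, C) else None)"
| "step V E M (F, Sl, C) (Evict v) =
     (if v \<in> F \<and> (v \<in> Sl \<or> (\<forall>w. (v, w) \<in> E \<longrightarrow> w \<in> C))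
      then Some (F - {v}, Sl, C) else None)"

fun run :: "'a set \<Rightarrow> ('a \<times> 'a) set \<Rightarrow> nat \<Rightarrow> 'a mstate \<Rightarrow> 'a io_op list \<Rightarrow> 'a mstate option" where
  "run V E M s [] = Some s"
| "run V E M s (op # ops) =
     (case step V E M s op of None \<Rightarrow> None | Some s' \<Rightarrow> run V E M s' ops)"

text \<open>A valid evaluation: starts with empty memories, every step legal, and at the
  end every vertex has been evaluated (each exactly once, since Compute requires
  the vertex not yet evaluated).\<close>
definition valid_evaluation :: "'a set \<Rightarrow> ('a \<times> 'a) set \<Rightarrow> nat \<Rightarrow> 'a io_op list \<Rightarrow> bool" where
  "valid_evaluation V E M ops \<longleftrightarrow>
     (\<exists>F Sl. run V E M ({}, {}, {}) ops = Some (F, Sl, V))"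

fun is_io :: "'a io_op \<Rightarrow> bool" where
  "is_io (Read _) = True"
| "is_io (Write _) = True"
| "is_io _ = False"

definition io_cost :: "'a io_op list \<Rightarrow> nat" where
  "io_cost ops = length (filter is_io ops)"

definition J_opt :: "'a set \<Rightarrow> ('a \<times> 'a) set \<Rightarrow> nat \<Rightarrow> nat" where
  "J_opt V E M = (LEAST k. \<exists>ops. valid_evaluation V E M ops \<and> io_cost ops = k)"

definition topo_orders :: "'a set \<Rightarrow> ('a \<times> 'a) set \<Rightarrow> 'a list set" where
  "topo_orders V E = {X. distinct X \<and> set X = V \<and>
      (\<forall>i j. i < length X \<and> j < length X \<and> (X ! i, X ! j) \<in> E \<longrightarrow> i < j)}"

definition is_partition :: "'a set \<Rightarrow> 'a set set \<Rightarrow> bool" where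
  "is_partition V P \<longleftrightarrow> \<Union>P = V \<and> {} \<notin> P \<and>
      (\<forall>S\<in>P. \<forall>T\<in>P. S \<noteq> T \<longrightarrow> S \<inter> T = {})"

definition contiguous :: "'a list \<Rightarrow> 'a set \<Rightarrow> bool" where
  "contiguous X S \<longleftrightarrow> (\<exists>a b. a \<le> b \<and> b \<le> length X \<and> S = {X ! i | i. a \<le> i \<and> i < b})"

definition contig_partitions :: "'a set \<Rightarrow> 'a list \<Rightarrow> 'a set set set" where
  "contig_partitions V X = {P. is_partition V P \<and> (\<forall>S\<in>P. contiguous X S)}"

definition cut_value :: "('a \<times> 'a) set \<Rightarrow> nat \<Rightarrow> 'a set set \<Rightarrow> real" where
  "cut_value E M P =
     (\<Sum>S\<in>P. \<Sum>e\<in>boundary E S. 1 / real (d_out E (fst e))) - 2 * real M * real (card P)"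

end

theory Submission
  imports Defs
begin

text \<open>
  Fix an I/O-optimal evaluation and let X be the order in which it computes the vertices; X is
  topological, so it suffices to bound the cut value of every contiguous partition of X by the
  I/O cost. Each part S is computed during a time window. The source u of a boundary edge of S
  either lies outside S and is an operand of a vertex of S, so u is in fast memory when the
  window opens or is read during it; or u lies in S and is still needed after the window closes,
  so u is in fast memory when the window closes or is written during it. A source has at most
  d_out(u) boundary edges, each of weight 1/d_out(u), so S contributes at most 2M plus the I/Os
  of its window, and the windows of different parts are disjoint.
\<close>

lemma nat_step_crossing:
  fixes P :: "nat \<Rightarrow> bool"
  assumes "\<not> P a" "P b" "a \<le> b"
  obtains t where "a \<le> t" "t < b" "\<not> P t" "P (Suc t)"
proof -
  obtain k where "k < b - a" "\<not> P (a + k)" "P (Suc (a + k))"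
    using ex_least_nat_less[of "\<lambda>i. P (a + i)" "b - a"] assms by auto
  then show ?thesis using that[of "a + k"] by auto
qed

lemma sum_inverse_d_out_le_card_sources:
  assumes "finite E" "D \<subseteq> E"
  shows "(\<Sum>e\<in>D. 1 / real (d_out E (fst e))) \<le> real (card (fst ` D))"
proof -
  have "finite D" using assms finite_subset by blast
  have "(\<Sum>e\<in>D. 1 / real (d_out E (fst e))) =
      (\<Sum>u\<in>fst ` D. \<Sum>e\<in>{e\<in>D. fst e = u}. 1 / real (d_out E (fst e)))"
    using \<open>finite D\<close> by (intro sum.group[symmetric]) auto
  also have "\<dots> \<le> (\<Sum>u\<in>fst ` D. 1)"
  proof (rule sum_mono)
    fix u assume "u \<in> fst ` D"
    have "finite {v. (u, v) \<in> E}"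
      using finite_imageI[OF assms(1), of snd] by (rule finite_subset[rotated]) force
    have "card {e\<in>D. fst e = u} \<le> card (Pair u ` {v. (u, v) \<in> E})"
      using assms(2) \<open>finite {v. (u, v) \<in> E}\<close> by (intro card_mono) force+
    also have "\<dots> \<le> d_out E u"
      unfolding d_out_def by (rule card_image_le) fact
    finally have "card {e\<in>D. fst e = u} \<le> d_out E u" .
    moreover have "(\<Sum>e\<in>{e\<in>D. fst e = u}. 1 / real (d_out E (fst e))) =
        real (card {e\<in>D. fst e = u}) / real (d_out E u)"
      by simp
    ultimately show "(\<Sum>e\<in>{e\<in>D. fst e = u}. 1 / real (d_out E (fst e))) \<le> 1"
      by (cases "d_out E u = 0") (auto simp: divide_le_eq_1)
  qed
  finally show ?thesis by simp
qed

lemma topo_orders_snoc: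
  assumes "L \<in> topo_orders C E" "v \<notin> C"
    and "\<forall>u. (u, v) \<in> E \<longrightarrow> u \<in> C" "\<forall>u w. (u, w) \<in> E \<longrightarrow> w \<in> C \<longrightarrow> u \<in> C"
  shows "L @ [v] \<in> topo_orders (insert v C) E"
  using assms unfolding topo_orders_def
  by (auto simp: nth_append less_Suc_eq split: if_splits)

lemma finite_topo_orders:
  assumes "finite V"
  shows "finite (topo_orders V E)"
proof (rule finite_subset[OF _ finite_lists_length_le[OF assms, of "card V"]])
  show "topo_orders V E \<subseteq> {xs. set xs \<subseteq> V \<and> length xs \<le> card V}"
    by (auto simp: topo_orders_def distinct_card[symmetric])
qed

lemma finite_contig_partitions:
  assumes "finite V"
  shows "finite (contig_partitions V X)"
  by (rule finite_subset[of _ "Pow (Pow V)"])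
    (use assms in \<open>auto simp: contig_partitions_def is_partition_def\<close>)

lemma contig_partitions_nonempty:
  assumes "set X = V"
  shows "contig_partitions V X \<noteq> {}"
proof (cases "V = {}")
  case True
  then have "{} \<in> contig_partitions V X"
    by (simp add: contig_partitions_def is_partition_def)
  then show ?thesis by blast
next
  case False
  have "contiguous X V"
    unfolding contiguous_def using assms
    by (intro exI[of _ 0] exI[of _ "length X"]) (auto simp: in_set_conv_nth)
  then have "{V} \<in> contig_partitions V X"
    using False by (simp add: contig_partitions_def is_partition_def)
  then show ?thesis by blast
qed

lemma J_opt_attained:
  assumes "\<exists>ops. valid_evaluation V E M ops"
  obtains ops where "valid_evaluation V E M ops" "io_cost ops = J_opt V E M"
proof -
  from assms have "\<exists>k ops. valid_evaluation V E M ops \<and> io_cost ops = k" by blast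
  then have "\<exists>ops. valid_evaluation V E M ops \<and> io_cost ops = J_opt V E M"
    unfolding J_opt_def by (rule LeastI_ex)
  then show ?thesis using that by blast
qed

definition eval_order :: "'a io_op list \<Rightarrow> 'a list" where
  "eval_order ops = [v. Compute v \<leftarrow> ops]"

lemma eval_order_append: "eval_order (xs @ ys) = eval_order xs @ eval_order ys"
  by (simp add: eval_order_def)

fun operand :: "'a io_op \<Rightarrow> 'a" where
  "operand (Compute v) = v"
| "operand (Read v) = v"
| "operand (Write v) = v"
| "operand (Evict v) = v"

lemma run_append:
  "run V E M s (xs @ ys) = Option.bind (run V E M s xs) (\<lambda>s'. run V E M s' ys)"
  by (induction xs arbitrary: s) (auto split: option.split)

lemma step_evaluated_mono:
  "step V E M (F, Sl, C) op = Some (F', Sl', C') \<Longrightarrow> C \<subseteq> C'"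
  by (cases op) (auto split: if_splits)

lemma step_newly_evaluated:
  "step V E M (F, Sl, C) op = Some (F', Sl', C') \<Longrightarrow> x \<notin> C \<Longrightarrow> x \<in> C' \<Longrightarrow>
    (\<forall>u. (u, x) \<in> E \<longrightarrow> u \<in> F) \<and> x \<in> F'"
  by (cases op) (auto split: if_splits)

lemma step_enters_fast:
  "step V E M (F, Sl, C) op = Some (F', Sl', C') \<Longrightarrow> x \<notin> F \<Longrightarrow> x \<in> F' \<Longrightarrow>
    op = Read x \<or> (x \<notin> C \<and> x \<in> C')"
  by (cases op) (auto split: if_splits)

lemma step_leaves_fast:
  "step V E M (F, Sl, C) op = Some (F', Sl', C') \<Longrightarrow> x \<in> F \<Longrightarrow> x \<notin> F' \<Longrightarrow>
    x \<in> Sl \<or> (\<forall>w. (x, w) \<in> E \<longrightarrow> w \<in> C)"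
  by (cases op) (auto split: if_splits)

lemma step_enters_slow:
  "step V E M (F, Sl, C) op = Some (F', Sl', C') \<Longrightarrow> x \<notin> Sl \<Longrightarrow> x \<in> Sl' \<Longrightarrow> op = Write x"
  by (cases op) (auto split: if_splits)

text \<open>The list L records the order in which the vertices of C were computed.\<close>
fun state_inv :: "'a set \<Rightarrow> ('a \<times> 'a) set \<Rightarrow> nat \<Rightarrow> 'a mstate \<Rightarrow> 'a list \<Rightarrow> bool" where
  "state_inv V E M (F, Sl, C) L \<longleftrightarrow>
     F \<subseteq> C \<and> Sl \<subseteq> C \<and> C \<subseteq> V \<and> card F \<le> M \<and>
     (\<forall>u w. (u, w) \<in> E \<longrightarrow> w \<in> C \<longrightarrow> u \<in> C) \<and> L \<in> topo_orders C E"

lemma step_preserves_state_inv: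
  assumes "state_inv V E M s L" "step V E M s op = Some s'"
  shows "state_inv V E M s' (L @ eval_order [op])"
proof -
  obtain F Sl C where s: "s = (F, Sl, C)" by (cases s)
  show ?thesis
  proof (cases op)
    case (Compute v)
    with assms s have "v \<in> V" "v \<notin> C" "\<forall>u. (u, v) \<in> E \<longrightarrow> u \<in> F" "card (insert v F) \<le> M"
      and s': "s' = (insert v F, Sl, insert v C)"
      by (auto split: if_splits)
    with assms(1) s topo_orders_snoc[of L C E v] show ?thesis
      by (auto simp: Compute eval_order_def)
  next
    case (Evict v)
    with assms s show ?thesis
      by (auto simp: eval_order_def split: if_splits intro: le_trans[OF card_Diff1_le])
  qed (use assms s in \<open>auto simp: eval_order_def split: if_splits\<close>)
qed

locale evaluation =
  fixes V :: "'a set" and E :: "('a \<times> 'a) set" and M :: nat and ops :: "'a io_op list"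
  assumes graph: "comp_graph V E" and valid: "valid_evaluation V E M ops"
begin

definition state :: "nat \<Rightarrow> 'a mstate" where
  "state t = the (run V E M ({}, {}, {}) (take t ops))"

definition fast :: "nat \<Rightarrow> 'a set" where
  "fast t = fst (state t)"

definition slow :: "nat \<Rightarrow> 'a set" where
  "slow t = fst (snd (state t))"

definition evaluated :: "nat \<Rightarrow> 'a set" where
  "evaluated t = snd (snd (state t))"

lemma finite_V: "finite V" and edges_in_V: "E \<subseteq> V \<times> V"
  using graph by (auto simp: comp_graph_def)

lemma run_take: "run V E M ({}, {}, {}) (take t ops) = Some (state t)"
proof -
  obtain s where
    "Option.bind (run V E M ({}, {}, {}) (take t ops)) (\<lambda>s'. run V E M s' (drop t ops)) = Some s"
    using valid by (auto simp: valid_evaluation_def simp flip: run_append)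
  then show ?thesis by (auto simp: state_def bind_eq_Some_conv)
qed

lemma step_trace:
  assumes "t < length ops"
  shows "step V E M (fast t, slow t, evaluated t) (ops ! t) =
    Some (fast (Suc t), slow (Suc t), evaluated (Suc t))"
  using run_take[of "Suc t"] assms
  by (simp add: take_Suc_conv_app_nth run_append run_take fast_def slow_def evaluated_def
      split: option.splits)

lemma state_inv_trace: "state_inv V E M (fast t, slow t, evaluated t) (eval_order (take t ops))"
proof (induction t)
  case 0
  show ?case by (simp add: fast_def slow_def evaluated_def state_def eval_order_def topo_orders_def)
next
  case (Suc t)
  show ?case
  proof (cases "t < length ops")
    case True
    then show ?thesis
      using step_preserves_state_inv[OF Suc step_trace[OF True]]
      by (simp add: take_Suc_conv_app_nth eval_order_def)
  next
    case False
    then show ?thesis using Suc by (simp add: fast_def slow_def evaluated_def state_def)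
  qed
qed

lemma
  shows fast_subset_evaluated: "fast t \<subseteq> evaluated t"
    and slow_subset_evaluated: "slow t \<subseteq> evaluated t"
    and evaluated_subset_V: "evaluated t \<subseteq> V"
    and card_fast_le: "card (fast t) \<le> M"
    and evaluated_closed: "(u, w) \<in> E \<Longrightarrow> w \<in> evaluated t \<Longrightarrow> u \<in> evaluated t"
    and eval_order_take_topo: "eval_order (take t ops) \<in> topo_orders (evaluated t) E"
  using state_inv_trace[of t] by auto

lemma evaluated_final: "evaluated (length ops) = V"
  using valid by (auto simp: valid_evaluation_def evaluated_def state_def)

lemma evaluated_Suc: "evaluated t \<subseteq> evaluated (Suc t)"
proof (cases "t < length ops")
  case True
  then show ?thesis using step_evaluated_mono[OF step_trace] by simp
qed (simp add: evaluated_def state_def)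

lemma evaluated_mono: "t \<le> t' \<Longrightarrow> evaluated t \<subseteq> evaluated t'"
  using lift_Suc_mono_le[of evaluated, OF evaluated_Suc] .

lemma finite_E: "finite E"
  using edges_in_V finite_V by (meson finite_SigmaI finite_subset)

lemma finite_fast: "finite (fast t)"
  using fast_subset_evaluated evaluated_subset_V finite_V by (meson finite_subset)

lemma in_edge_source:
  assumes "lo \<le> hi" "hi \<le> length ops" "(u, v) \<in> E"
    and "u \<notin> evaluated hi - evaluated lo" "v \<in> evaluated hi - evaluated lo"
  shows "u \<in> fast lo \<or> (\<exists>t. lo \<le> t \<and> t < hi \<and> ops ! t = Read u)"
proof (cases "u \<in> fast lo")
  case False
  obtain tv where tv: "lo \<le> tv" "tv < hi" "v \<notin> evaluated tv" "v \<in> evaluated (Suc tv)"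
    using nat_step_crossing[of "\<lambda>t. v \<in> evaluated t" lo hi] assms(1,5) by auto
  have "u \<in> fast tv"
    using step_newly_evaluated[OF step_trace] tv assms(2,3) by fastforce
  then obtain t where t: "lo \<le> t" "t < tv" "u \<notin> fast t" "u \<in> fast (Suc t)"
    using nat_step_crossing[of "\<lambda>t. u \<in> fast t" lo tv] False tv by auto
  have "evaluated lo \<subseteq> evaluated t" "evaluated (Suc t) \<subseteq> evaluated hi"
    using t tv evaluated_mono by auto
  then have "\<not> (u \<notin> evaluated t \<and> u \<in> evaluated (Suc t))"
    using assms(4) by blast
  moreover have "t < length ops" using t tv assms(2) by simp
  ultimately have "ops ! t = Read u"
    using step_enters_fast[OF step_trace] t by blast
  then show ?thesis using t tv by auto
qed simp

lemma out_edge_source: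
  assumes "lo \<le> hi" "hi \<le> length ops" "(u, w) \<in> E"
    and "u \<in> evaluated hi - evaluated lo" "w \<notin> evaluated hi - evaluated lo"
  shows "u \<in> fast hi \<or> (\<exists>t. lo \<le> t \<and> t < hi \<and> ops ! t = Write u)"
proof (cases "u \<in> fast hi")
  case False
  obtain tu where tu: "lo \<le> tu" "tu < hi" "u \<notin> evaluated tu" "u \<in> evaluated (Suc tu)"
    using nat_step_crossing[of "\<lambda>t. u \<in> evaluated t" lo hi] assms(1,4) by auto
  have "u \<in> fast (Suc tu)"
    using step_newly_evaluated[OF step_trace] tu assms(2) by fastforce
  then obtain t' where t': "Suc tu \<le> t'" "t' < hi" "u \<in> fast t'" "u \<notin> fast (Suc t')"
    using nat_step_crossing[of "\<lambda>t. u \<notin> fast t" "Suc tu" hi] False tu by auto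
  have "w \<notin> evaluated hi"
    using assms(3-5) evaluated_closed by blast
  then have "w \<notin> evaluated t'"
    using t' evaluated_mono[of t' hi] by auto
  moreover have "t' < length ops" using t' assms(2) by simp
  ultimately have "u \<in> slow t'"
    using step_leaves_fast[OF step_trace] t' assms(3) by blast
  moreover have "u \<notin> slow tu"
    using slow_subset_evaluated tu by blast
  ultimately obtain t where t: "tu \<le> t" "t < t'" "u \<notin> slow t" "u \<in> slow (Suc t)"
    using nat_step_crossing[of "\<lambda>t. u \<in> slow t" tu t'] t' by auto
  then have "ops ! t = Write u"
    using step_enters_slow[OF step_trace] t' assms(2) by fastforce
  then show ?thesis using t t' tu by auto
qed simp

definition io_steps :: "nat \<Rightarrow> nat \<Rightarrow> nat set" where
  "io_steps lo hi = {t. lo \<le> t \<and> t < hi \<and> is_io (ops ! t)}"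

lemma boundary_weight_le_io_steps:
  assumes "lo \<le> hi" "hi \<le> length ops"
  shows "(\<Sum>e\<in>boundary E (evaluated hi - evaluated lo). 1 / real (d_out E (fst e)))
    \<le> 2 * real M + real (card (io_steps lo hi))"
proof -
  let ?S = "evaluated hi - evaluated lo"
  let ?B = "boundary E ?S"
  let ?IO = "(\<lambda>t. operand (ops ! t)) ` io_steps lo hi"
  have finite_io: "finite (io_steps lo hi)"
    unfolding io_steps_def by (rule finite_subset[of _ "{..<hi}"]) auto
  have "fst ` ?B \<subseteq> fast lo \<union> fast hi \<union> ?IO"
  proof
    fix u assume "u \<in> fst ` ?B"
    then obtain v where uv: "(u, v) \<in> E" "(u \<in> ?S) \<noteq> (v \<in> ?S)"
      by (force simp: boundary_def)
    then consider "u \<in> fast lo" | "u \<in> fast hi"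
      | t where "lo \<le> t" "t < hi" "ops ! t = Read u \<or> ops ! t = Write u"
      using in_edge_source[OF assms uv(1)] out_edge_source[OF assms uv(1)] by blast
    then show "u \<in> fast lo \<union> fast hi \<union> ?IO"
    proof cases
      case 3
      then have "t \<in> io_steps lo hi" "u = operand (ops ! t)" by (auto simp: io_steps_def)
      then show ?thesis by blast
    qed auto
  qed
  then have "card (fst ` ?B) \<le> card (fast lo \<union> fast hi \<union> ?IO)"
    using finite_fast finite_io by (intro card_mono) auto
  also have "\<dots> \<le> card (fast lo) + card (fast hi) + card ?IO"
    using card_Un_le[of "fast lo \<union> fast hi" ?IO] card_Un_le[of "fast lo" "fast hi"] by linarith
  also have "\<dots> \<le> M + M + card (io_steps lo hi)"
    using card_fast_le card_image_le[OF finite_io] by (intro add_mono)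
  finally have "real (card (fst ` ?B)) \<le> 2 * real M + real (card (io_steps lo hi))"
    by linarith
  moreover have "?B \<subseteq> E" by (auto simp: boundary_def)
  ultimately show ?thesis
    using sum_inverse_d_out_le_card_sources[OF finite_E, of ?B] by linarith
qed

abbreviation X :: "'a list" where
  "X \<equiv> eval_order ops"

definition num_evaluated :: "nat \<Rightarrow> nat" where
  "num_evaluated t = length (eval_order (take t ops))"

definition first_time :: "nat \<Rightarrow> nat" where
  "first_time a = (LEAST t. a \<le> num_evaluated t)"

lemma eval_order_topo: "X \<in> topo_orders V E"
  using eval_order_take_topo[of "length ops"] evaluated_final by simp

lemma distinct_X: "distinct X"
  using eval_order_topo by (simp add: topo_orders_def)

lemma take_num_evaluated: "take (num_evaluated t) X = eval_order (take t ops)"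
proof -
  have "X = eval_order (take t ops) @ eval_order (drop t ops)"
    unfolding eval_order_append[symmetric] by simp
  then show ?thesis by (simp add: num_evaluated_def append_eq_conv_conj)
qed

lemma evaluated_eq_take: "evaluated t = set (take (num_evaluated t) X)"
  using eval_order_take_topo[of t] take_num_evaluated[of t] by (simp add: topo_orders_def)

lemma num_evaluated_Suc:
  "num_evaluated t \<le> num_evaluated (Suc t) \<and> num_evaluated (Suc t) \<le> Suc (num_evaluated t)"
  by (cases "t < length ops")
    (auto simp: num_evaluated_def eval_order_def take_Suc_conv_app_nth split: io_op.split)

lemma num_evaluated_mono: "t \<le> t' \<Longrightarrow> num_evaluated t \<le> num_evaluated t'"
  using lift_Suc_mono_le[of num_evaluated] num_evaluated_Suc by blast

lemma num_evaluated_beyond: "length ops \<le> t \<Longrightarrow> num_evaluated t = length X"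
  by (simp add: num_evaluated_def)

lemma
  assumes "a \<le> length X"
  shows num_evaluated_first_time: "num_evaluated (first_time a) = a"
    and first_time_le_iff: "first_time a \<le> t \<longleftrightarrow> a \<le> num_evaluated t"
proof -
  have "a \<le> num_evaluated (length ops)"
    using assms num_evaluated_beyond by simp
  then have ge: "a \<le> num_evaluated (first_time a)"
    unfolding first_time_def by (rule LeastI)
  show "num_evaluated (first_time a) = a"
  proof (cases "first_time a")
    case (Suc t)
    then have "\<not> a \<le> num_evaluated t"
      unfolding first_time_def by (metis lessI not_less_Least)
    then show ?thesis using ge Suc num_evaluated_Suc[of t] by simp
  qed (use ge in \<open>simp add: num_evaluated_def eval_order_def\<close>)
  show "first_time a \<le> t \<longleftrightarrow> a \<le> num_evaluated t"
    using ge num_evaluated_mono[of "first_time a" t] Least_le[of "\<lambda>t. a \<le> num_evaluated t" t]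
    unfolding first_time_def by auto
qed

lemma first_time_le_length: "a \<le> length X \<Longrightarrow> first_time a \<le> length ops"
  using first_time_le_iff num_evaluated_beyond by simp

lemma contiguous_eq_window:
  assumes "a \<le> b" "b \<le> length X"
  shows "{X ! i | i. a \<le> i \<and> i < b} = evaluated (first_time b) - evaluated (first_time a)"
proof -
  have "set (take n X) = {X ! i | i. i < length X \<and> i < n}" for n
    using set_nths[of X "{..<n}"] by simp
  then have "set (take b X) - set (take a X) = {X ! i | i. a \<le> i \<and> i < b}"
    using assms distinct_X by (auto simp: nth_eq_iff_index_eq)
  then show ?thesis
    using assms evaluated_eq_take num_evaluated_first_time by simp
qed

text \<open>An I/O is charged to the part containing the next vertex to be computed.\<close>
definition io_charged_to :: "'a set \<Rightarrow> nat set" where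
  "io_charged_to S =
    {t. is_io (ops ! t) \<and> num_evaluated t < length X \<and> X ! num_evaluated t \<in> S}"

lemma io_charged_to_subset: "io_charged_to S \<subseteq> {t. t < length ops \<and> is_io (ops ! t)}"
proof
  fix t assume "t \<in> io_charged_to S"
  then have "is_io (ops ! t)" "num_evaluated t \<noteq> length X"
    by (auto simp: io_charged_to_def)
  then show "t \<in> {t. t < length ops \<and> is_io (ops ! t)}"
    using num_evaluated_beyond[of t] by (cases "t < length ops") auto
qed

lemma io_charged_to_window:
  assumes "a \<le> b" "b \<le> length X"
  shows "io_charged_to {X ! i | i. a \<le> i \<and> i < b} = io_steps (first_time a) (first_time b)"
proof -
  have "(n < length X \<and> X ! n \<in> {X ! i | i. a \<le> i \<and> i < b}) \<longleftrightarrow> a \<le> n \<and> n < b" for n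
    using assms nth_eq_iff_index_eq[OF distinct_X] by fastforce
  then show ?thesis
    using assms first_time_le_iff[of a] first_time_le_iff[of b]
    by (auto simp: io_charged_to_def io_steps_def not_le[symmetric])
qed

lemma contiguous_boundary_weight:
  assumes "contiguous X S"
  shows "(\<Sum>e\<in>boundary E S. 1 / real (d_out E (fst e)))
    \<le> 2 * real M + real (card (io_charged_to S))"
proof -
  obtain a b where ab: "a \<le> b" "b \<le> length X" "S = {X ! i | i. a \<le> i \<and> i < b}"
    using assms by (auto simp: contiguous_def)
  have "first_time a \<le> first_time b" "first_time b \<le> length ops"
    using ab first_time_le_iff num_evaluated_first_time first_time_le_length by auto
  from boundary_weight_le_io_steps[OF this] show ?thesis
    using ab contiguous_eq_window io_charged_to_window by simp
qed

lemma cut_value_le_io_cost: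
  assumes "P \<in> contig_partitions V X"
  shows "cut_value E M P \<le> real (io_cost ops)"
proof -
  have part: "is_partition V P" and contig: "\<forall>S\<in>P. contiguous X S"
    using assms by (auto simp: contig_partitions_def)
  have "P \<subseteq> Pow V"
    using part by (auto simp: is_partition_def)
  then have "finite P"
    using finite_V by (simp add: finite_subset)
  have finite_charged: "finite (io_charged_to S)" for S
    using io_charged_to_subset by (rule finite_subset) simp
  have "io_charged_to S \<inter> io_charged_to T = {}" if "S \<in> P" "T \<in> P" "S \<noteq> T" for S T
    using part that by (auto simp: is_partition_def io_charged_to_def)
  then have "(\<Sum>S\<in>P. card (io_charged_to S)) = card (\<Union>S\<in>P. io_charged_to S)"
    using \<open>finite P\<close> finite_charged by (simp add: card_UN_disjoint)
  also have "\<dots> \<le> card {t. t < length ops \<and> is_io (ops ! t)}"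
    using io_charged_to_subset by (intro card_mono) auto
  also have "\<dots> = io_cost ops"
    by (simp add: io_cost_def length_filter_conv_card)
  finally have "(\<Sum>S\<in>P. real (card (io_charged_to S))) \<le> real (io_cost ops)"
    by (simp flip: of_nat_sum)
  moreover have "(\<Sum>S\<in>P. \<Sum>e\<in>boundary E S. 1 / real (d_out E (fst e)))
      \<le> (\<Sum>S\<in>P. 2 * real M + real (card (io_charged_to S)))"
    using contig contiguous_boundary_weight by (intro sum_mono) auto
  ultimately show ?thesis
    by (simp add: cut_value_def sum.distrib algebra_simps)
qed

end

theorem theorem4p2:
  fixes V :: "'a set" and E :: "('a \<times> 'a) set" and M :: nat
  assumes "comp_graph V E"
    and "\<exists>ops. valid_evaluation V E M ops"
  shows "real (J_opt V E M) \<ge>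
    Min ((\<lambda>X. Max (cut_value E M ` contig_partitions V X)) ` topo_orders V E)"
proof -
  obtain ops where valid: "valid_evaluation V E M ops" and opt: "io_cost ops = J_opt V E M"
    using J_opt_attained[OF assms(2)] .
  interpret evaluation V E M ops
    using assms(1) valid by unfold_locales
  have "Min ((\<lambda>X. Max (cut_value E M ` contig_partitions V X)) ` topo_orders V E)
      \<le> Max (cut_value E M ` contig_partitions V X)"
    using finite_topo_orders[OF finite_V] eval_order_topo by (intro Min_le) auto
  also have "\<dots> \<le> real (io_cost ops)"
    using finite_contig_partitions[OF finite_V] contig_partitions_nonempty eval_order_topo
      cut_value_le_io_cost
    by (subst Max_le_iff) (auto simp: topo_orders_def)
  finally show ?thesis using opt by simp
qed

end
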